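(* Let $t$ be a positive integer and let $M$ be a $t$-spike of order $r$. Then $r(M) = r^*(M) = r$, where $r^*$ denotes the rank function of the dual $M^*$.
   Context: For a positive integer $t$, a matroid $M$ is a $t$-spike of order $r$ (where $r\ge t$) if there is a partition $(A_1,\ldots,A_r)$ of $E(M)$ into 2-element sets (arms) such that, for every $t$-element subset $J\subseteq\{1,\dots,r\}$, the set $\bigcup_{j\in J}A_j$ is both a circuit and a cocircuit of $M$. *)

theory Defs
  imports Main
begin

definition matroid :: "'a set \<Rightarrow> ('a set \<Rightarrow> bool) \<Rightarrow> bool" where
  "matroid E indep \<longleftrightarrow>
     finite E \<and>
     indep {} \<and>
     (\<forall>X. indep X \<longrightarrow> X \<subseteq> E) \<and>
     (\<forall>X Y. indep Y \<and> X \<subseteq> Y \<longrightarrow> indep X) \<and>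
     (\<forall>X Y. indep X \<and> indep Y \<and> card X < card Y \<longrightarrow> (\<exists>e \<in> Y - X. indep (insert e X)))"

definition mrank :: "'a set \<Rightarrow> ('a set \<Rightarrow> bool) \<Rightarrow> 'a set \<Rightarrow> nat" where
  "mrank E indep X = Max {card Y | Y. Y \<subseteq> X \<and> indep Y}"

definition basis :: "'a set \<Rightarrow> ('a set \<Rightarrow> bool) \<Rightarrow> 'a set \<Rightarrow> bool" where
  "basis E indep B \<longleftrightarrow> indep B \<and> (\<forall>X. indep X \<and> B \<subseteq> X \<longrightarrow> X = B)"

definition circuit :: "'a set \<Rightarrow> ('a set \<Rightarrow> bool) \<Rightarrow> 'a set \<Rightarrow> bool" where
  "circuit E indep C \<longleftrightarrow> C \<subseteq> E \<and> \<not> indep C \<and> (\<forall>x \<in> C. indep (C - {x}))"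

definition dual_indep :: "'a set \<Rightarrow> ('a set \<Rightarrow> bool) \<Rightarrow> 'a set \<Rightarrow> bool" where
  "dual_indep E indep X \<longleftrightarrow> X \<subseteq> E \<and> (\<exists>B. basis E indep B \<and> X \<inter> B = {})"

definition cocircuit :: "'a set \<Rightarrow> ('a set \<Rightarrow> bool) \<Rightarrow> 'a set \<Rightarrow> bool" where
  "cocircuit E indep C \<longleftrightarrow> circuit E (dual_indep E indep) C"

definition spike :: "nat \<Rightarrow> nat \<Rightarrow> 'a set \<Rightarrow> ('a set \<Rightarrow> bool) \<Rightarrow> bool" where
  "spike t r E indep \<longleftrightarrow> matroid E indep \<and> r \<ge> t \<and>
     (\<exists>A :: nat \<Rightarrow> 'a set.
        (\<forall>i \<in> {1..r}. card (A i) = 2) \<and>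
        (\<forall>i \<in> {1..r}. \<forall>j \<in> {1..r}. i \<noteq> j \<longrightarrow> A i \<inter> A j = {}) \<and>
        (\<Union>i \<in> {1..r}. A i) = E \<and>
        (\<forall>J. J \<subseteq> {1..r} \<and> card J = t \<longrightarrow>
             circuit E indep (\<Union>j \<in> J. A j) \<and> cocircuit E indep (\<Union>j \<in> J. A j)))"

end

theory Submission
  imports Defs
begin

text \<open>
  Let \<open>U\<close> be the union of the arms \<open>A\<^sub>1, \<dots>, A\<^sub>t\<close> and \<open>x \<in> A\<^sub>t\<close>.
  Since \<open>U\<close> is a circuit, \<open>U - {x}\<close> extends to a basis \<open>B\<^sub>1\<close>; since \<open>U\<close> is a cocircuit,
  \<open>U - {x}\<close> avoids some basis \<open>B\<^sub>2\<close>.  Both \<open>B\<^sub>1\<close> and \<open>E - B\<^sub>2\<close> contain the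
  \<open>t - 1\<close> arms \<open>A\<^sub>1, \<dots>, A\<^sub>t\<^sub>-\<^sub>1\<close> and meet every union of \<open>t\<close> arms
  (a basis meets every cocircuit and contains no circuit).  Such a set misses at most
  \<open>t - 1\<close> arms entirely, so counting one element per arm it meets plus a second one per
  arm it contains shows it has at least \<open>r\<close> elements.  Hence \<open>r \<le> |B\<^sub>1|\<close> and
  \<open>r \<le> 2r - |B\<^sub>2|\<close>; as all bases have the same size, the rank is \<open>r\<close> and the
  corank is \<open>2r - r = r\<close>.
\<close>

lemma card_Int_UN_disjoint:
  assumes "finite I" "\<And>i. i \<in> I \<Longrightarrow> finite (A i)"
    and "\<And>i j. i \<in> I \<Longrightarrow> j \<in> I \<Longrightarrow> i \<noteq> j \<Longrightarrow> A i \<inter> A j = {}"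
  shows "card (S \<inter> (\<Union>i\<in>I. A i)) = (\<Sum>i\<in>I. card (A i \<inter> S))"
proof -
  have "S \<inter> (\<Union>i\<in>I. A i) = (\<Union>i\<in>I. A i \<inter> S)" by blast
  also have "card \<dots> = (\<Sum>i\<in>I. card (A i \<inter> S))"
    using assms by (intro card_UN_disjoint) blast+
  finally show ?thesis .
qed

lemma hitting_set_card_ge:
  assumes "finite I"
    and arm_card: "\<And>i. i \<in> I \<Longrightarrow> card (A i) = 2"
    and arm_disjoint: "\<And>i j. i \<in> I \<Longrightarrow> j \<in> I \<Longrightarrow> i \<noteq> j \<Longrightarrow> A i \<inter> A j = {}"
    and "K \<subseteq> I" and arms_in_S: "\<And>k. k \<in> K \<Longrightarrow> A k \<subseteq> S"
    and hits: "\<And>J. J \<subseteq> I \<Longrightarrow> card J = Suc (card K) \<Longrightarrow> (\<Union>j\<in>J. A j) \<inter> S \<noteq> {}"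
  shows "card I \<le> card (S \<inter> (\<Union>i\<in>I. A i))"
proof -
  have arm_finite: "finite (A i)" if "i \<in> I" for i
    using arm_card[OF that] card.infinite by fastforce
  define Z where "Z = {i \<in> I. A i \<inter> S = {}}"
  have "card Z \<le> card K"
  proof (rule ccontr)
    assume "\<not> card Z \<le> card K"
    then obtain J where "J \<subseteq> Z" "card J = Suc (card K)"
      using obtain_subset_with_card_n[of "Suc (card K)" Z] by auto
    moreover from \<open>J \<subseteq> Z\<close> have "J \<subseteq> I" "(\<Union>j\<in>J. A j) \<inter> S = {}"
      unfolding Z_def by auto
    ultimately show False using hits by blast
  qed
  have "of_bool (i \<in> K) + 1 \<le> card (A i \<inter> S) + of_bool (i \<in> Z)" if "i \<in> I" for i
  proof (cases "i \<in> K")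
    case True
    then show ?thesis using arms_in_S arm_card[OF that] by (simp add: Int_absorb2)
  next
    case False
    have "A i \<inter> S = {} \<or> 1 \<le> card (A i \<inter> S)"
      using arm_finite[OF that] by (auto simp: Suc_le_eq card_gt_0_iff)
    then show ?thesis using False that by (auto simp: Z_def)
  qed
  then have "(\<Sum>i\<in>I. of_bool (i \<in> K) + 1) \<le> (\<Sum>i\<in>I. card (A i \<inter> S) + of_bool (i \<in> Z))"
    by (rule sum_mono)
  moreover have "I \<inter> {i. i \<in> K} = K" "I \<inter> {i. i \<in> Z} = Z"
    using \<open>K \<subseteq> I\<close> by (auto simp: Z_def)
  ultimately have "card K + card I \<le> card (S \<inter> (\<Union>i\<in>I. A i)) + card Z"
    using \<open>finite I\<close> arm_finite arm_disjoint
    by (simp add: sum.distrib sum_Suc card_Int_UN_disjoint)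
  with \<open>card Z \<le> card K\<close> show ?thesis by linarith
qed

lemma matroid_finite_ground: "matroid E indep \<Longrightarrow> finite E"
  unfolding matroid_def by blast

lemma matroid_indep_subset_ground: "matroid E indep \<Longrightarrow> indep X \<Longrightarrow> X \<subseteq> E"
  unfolding matroid_def by blast

lemma matroid_indep_subset: "matroid E indep \<Longrightarrow> indep Y \<Longrightarrow> X \<subseteq> Y \<Longrightarrow> indep X"
  unfolding matroid_def by blast

lemma matroid_indep_augment:
  "matroid E indep \<Longrightarrow> indep X \<Longrightarrow> indep Y \<Longrightarrow> card X < card Y \<Longrightarrow> \<exists>e \<in> Y - X. indep (insert e X)"
  unfolding matroid_def by blast

lemma basis_subset_ground: "matroid E indep \<Longrightarrow> basis E indep B \<Longrightarrow> B \<subseteq> E"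
  unfolding basis_def by (blast dest: matroid_indep_subset_ground)

lemma indep_card_le_basis:
  assumes m: "matroid E indep" and "basis E indep B" "indep Y"
  shows "card Y \<le> card B"
proof (rule ccontr)
  assume "\<not> card Y \<le> card B"
  moreover from \<open>basis E indep B\<close> have "indep B" and B_max: "\<And>X. indep X \<Longrightarrow> B \<subseteq> X \<Longrightarrow> X = B"
    by (auto simp: basis_def)
  ultimately obtain e where "e \<in> Y - B" "indep (insert e B)"
    using matroid_indep_augment[OF m _ \<open>indep Y\<close>] by (meson not_le)
  then show False using B_max[of "insert e B"] by blast
qed

lemma basis_card_eq:
  "matroid E indep \<Longrightarrow> basis E indep B \<Longrightarrow> basis E indep B' \<Longrightarrow> card B = card B'"
  by (meson basis_def indep_card_le_basis le_antisym)

lemma exists_basis_superset: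
  assumes m: "matroid E indep" and "indep X"
  shows "\<exists>B. basis E indep B \<and> X \<subseteq> B"
proof -
  have "Collect indep \<subseteq> Pow E" using matroid_indep_subset_ground[OF m] by blast
  then have "finite (Collect indep)" using matroid_finite_ground[OF m] finite_subset by blast
  then obtain B where "indep B" "X \<subseteq> B" "\<And>Y. indep Y \<Longrightarrow> B \<subseteq> Y \<Longrightarrow> B = Y"
    using finite_has_maximal2[of "Collect indep" X] \<open>indep X\<close> by auto
  then show ?thesis unfolding basis_def by metis
qed

lemma exists_basis: "matroid E indep \<Longrightarrow> \<exists>B. basis E indep B"
  using exists_basis_superset[of E indep "{}"] by (auto simp: matroid_def)

lemma mrank_eqI:
  assumes "finite X" "Y \<subseteq> X" "indep Y"
    and "\<And>Y'. Y' \<subseteq> X \<Longrightarrow> indep Y' \<Longrightarrow> card Y' \<le> card Y"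
  shows "mrank E indep X = card Y"
  unfolding mrank_def
proof (rule Max_eqI)
  have "{card Y | Y. Y \<subseteq> X \<and> indep Y} \<subseteq> card ` Pow X" by blast
  then show "finite {card Y | Y. Y \<subseteq> X \<and> indep Y}"
    using \<open>finite X\<close> finite_subset by blast
qed (use assms in auto)

lemma mrank_ground_eq_card_basis:
  "matroid E indep \<Longrightarrow> basis E indep B \<Longrightarrow> mrank E indep E = card B"
  by (intro mrank_eqI)
    (auto simp: basis_def matroid_finite_ground matroid_indep_subset_ground indep_card_le_basis)

lemma dual_mrank_ground:
  assumes m: "matroid E indep"
  shows "mrank E (dual_indep E indep) E = card E - mrank E indep E"
proof -
  obtain B where B: "basis E indep B" using exists_basis[OF m] ..
  have "finite E" using matroid_finite_ground[OF m] .
  have card_compl: "card (E - B') = card E - card B" if "basis E indep B'" for B'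
  proof -
    have "B' \<subseteq> E" using basis_subset_ground[OF m that] .
    then show ?thesis
      using basis_card_eq[OF m B that] \<open>finite E\<close> by (simp add: card_Diff_subset finite_subset)
  qed
  have "mrank E (dual_indep E indep) E = card (E - B)"
  proof (rule mrank_eqI)
    show "dual_indep E indep (E - B)" using B by (auto simp: dual_indep_def)
    fix Y assume "dual_indep E indep Y"
    then obtain B' where "basis E indep B'" "Y \<subseteq> E - B'" by (auto simp: dual_indep_def)
    then show "card Y \<le> card (E - B)"
      using card_mono[OF finite_Diff[OF \<open>finite E\<close>]] card_compl B by metis
  qed (use \<open>finite E\<close> in auto)
  then show ?thesis using card_compl[OF B] mrank_ground_eq_card_basis[OF m B] by simp
qed

lemma circuit_not_subset_indep:
  "matroid E indep \<Longrightarrow> circuit E indep C \<Longrightarrow> indep B \<Longrightarrow> \<not> C \<subseteq> B"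
  unfolding circuit_def by (blast dest: matroid_indep_subset)

lemma cocircuit_Int_basis:
  "cocircuit E indep C \<Longrightarrow> basis E indep B \<Longrightarrow> C \<inter> B \<noteq> {}"
  unfolding cocircuit_def circuit_def dual_indep_def by blast

lemma circuit_delete_indep: "circuit E indep C \<Longrightarrow> x \<in> C \<Longrightarrow> indep (C - {x})"
  unfolding circuit_def by blast

lemma cocircuit_delete_avoids_basis:
  "cocircuit E indep C \<Longrightarrow> x \<in> C \<Longrightarrow> \<exists>B. basis E indep B \<and> (C - {x}) \<inter> B = {}"
  unfolding cocircuit_def circuit_def dual_indep_def by blast

locale spike_arms =
  fixes t r :: nat and E :: "'a set" and indep :: "'a set \<Rightarrow> bool" and A :: "nat \<Rightarrow> 'a set"
  assumes matroid: "matroid E indep"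
    and t_pos: "1 \<le> t" and t_le_r: "t \<le> r"
    and arm_card: "\<And>i. i \<in> {1..r} \<Longrightarrow> card (A i) = 2"
    and arm_disjoint: "\<And>i j. i \<in> {1..r} \<Longrightarrow> j \<in> {1..r} \<Longrightarrow> i \<noteq> j \<Longrightarrow> A i \<inter> A j = {}"
    and arms_cover: "(\<Union>i\<in>{1..r}. A i) = E"
    and arm_union_circuit: "\<And>J. J \<subseteq> {1..r} \<Longrightarrow> card J = t \<Longrightarrow> circuit E indep (\<Union>j\<in>J. A j)"
    and arm_union_cocircuit: "\<And>J. J \<subseteq> {1..r} \<Longrightarrow> card J = t \<Longrightarrow> cocircuit E indep (\<Union>j\<in>J. A j)"
begin

lemma arm_finite: "i \<in> {1..r} \<Longrightarrow> finite (A i)"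
  using arm_card card.infinite by fastforce

lemma card_ground: "card E = 2 * r"
proof -
  have "card E = (\<Sum>i\<in>{1..r}. card (A i))"
    unfolding arms_cover[symmetric] using arm_finite arm_disjoint by (intro card_UN_disjoint) auto
  then show ?thesis using arm_card by simp
qed

lemma card_ge_if_hits_arm_unions:
  assumes "S \<subseteq> E" and "\<And>k. k \<in> {1..<t} \<Longrightarrow> A k \<subseteq> S"
    and "\<And>J. J \<subseteq> {1..r} \<Longrightarrow> card J = t \<Longrightarrow> (\<Union>j\<in>J. A j) \<inter> S \<noteq> {}"
  shows "r \<le> card S"
proof -
  have "card {1..r} \<le> card (S \<inter> (\<Union>i\<in>{1..r}. A i))"
    by (rule hitting_set_card_ge[where K = "{1..<t}"])
      (use assms arm_card arm_disjoint t_pos t_le_r in auto)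
  then show ?thesis using \<open>S \<subseteq> E\<close> arms_cover by (simp add: Int_absorb2)
qed

lemma first_arms_in_punctured_circuit:
  obtains C x where "circuit E indep C" "cocircuit E indep C" "x \<in> C"
    "\<And>k. k \<in> {1..<t} \<Longrightarrow> A k \<subseteq> C - {x}"
proof -
  define C where "C = (\<Union>j\<in>{1..t}. A j)"
  have "circuit E indep C" "cocircuit E indep C"
    using arm_union_circuit arm_union_cocircuit t_le_r by (auto simp: C_def)
  moreover have "t \<in> {1..r}" using t_pos t_le_r by simp
  then obtain x where "x \<in> A t"
    using arm_card by (metis all_not_in_conv card.empty zero_neq_numeral)
  moreover have "A k \<subseteq> C - {x}" if "k \<in> {1..<t}" for k
  proof -
    from that t_le_r have "k \<in> {1..t}" "k \<in> {1..r}" "k \<noteq> t" by auto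
    then show ?thesis using arm_disjoint \<open>t \<in> {1..r}\<close> \<open>x \<in> A t\<close> unfolding C_def by blast
  qed
  moreover have "x \<in> C" using \<open>x \<in> A t\<close> t_pos by (auto simp: C_def)
  ultimately show ?thesis using that by blast
qed

lemma basis_card_ge:
  assumes "basis E indep B"
  shows "r \<le> card B"
proof -
  obtain C x where C: "circuit E indep C" "x \<in> C" and "\<And>k. k \<in> {1..<t} \<Longrightarrow> A k \<subseteq> C - {x}"
    using first_arms_in_punctured_circuit by metis
  moreover obtain B1 where "basis E indep B1" "C - {x} \<subseteq> B1"
    using exists_basis_superset[OF matroid circuit_delete_indep[OF C]] by blast
  ultimately have "r \<le> card B1"
    using card_ge_if_hits_arm_unions[of B1] basis_subset_ground[OF matroid]
      cocircuit_Int_basis[OF arm_union_cocircuit] by blast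
  then show ?thesis using basis_card_eq[OF matroid \<open>basis E indep B1\<close> assms] by simp
qed

lemma basis_card_le:
  assumes "basis E indep B"
  shows "card B \<le> r"
proof -
  obtain C x where C: "circuit E indep C" "cocircuit E indep C" "x \<in> C"
    and arms: "\<And>k. k \<in> {1..<t} \<Longrightarrow> A k \<subseteq> C - {x}"
    using first_arms_in_punctured_circuit by metis
  obtain B2 where B2: "basis E indep B2" "(C - {x}) \<inter> B2 = {}"
    using cocircuit_delete_avoids_basis[OF C(2,3)] by blast
  have "r \<le> card (E - B2)"
  proof (rule card_ge_if_hits_arm_unions)
    show "A k \<subseteq> E - B2" if "k \<in> {1..<t}" for k
      using arms[OF that] C(1) B2(2) by (auto simp: circuit_def)
    show "(\<Union>j\<in>J. A j) \<inter> (E - B2) \<noteq> {}" if "J \<subseteq> {1..r}" "card J = t" for J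
    proof -
      have "circuit E indep (\<Union>j\<in>J. A j)" using arm_union_circuit[OF that] .
      then have "(\<Union>j\<in>J. A j) \<subseteq> E" "\<not> (\<Union>j\<in>J. A j) \<subseteq> B2"
        using circuit_not_subset_indep[OF matroid] B2(1) by (auto simp: circuit_def basis_def)
      then show ?thesis by blast
    qed
  qed blast
  moreover have "card E = card B2 + card (E - B2)"
    using card_Int_Diff[OF matroid_finite_ground[OF matroid], of B2]
      basis_subset_ground[OF matroid B2(1)]
    by (simp add: Int_absorb1)
  ultimately have "card B2 \<le> r" using card_ground by linarith
  then show ?thesis using basis_card_eq[OF matroid B2(1) assms] by simp
qed

lemma mrank_ground: "mrank E indep E = r"
proof -
  obtain B where "basis E indep B" using exists_basis[OF matroid] ..
  then show ?thesis
    using mrank_ground_eq_card_basis[OF matroid] basis_card_ge basis_card_le le_antisym by metis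
qed

end

lemma obtain_spike_arms:
  assumes "t \<ge> 1" and "spike t r E indep"
  obtains A where "spike_arms t r E indep A"
  using assms unfolding spike_def spike_arms_def by blast

theorem lemma6p2:
  fixes t r :: nat and E :: "'a set" and indep :: "'a set \<Rightarrow> bool"
  assumes "t \<ge> 1" and "spike t r E indep"
  shows "mrank E indep E = r \<and> mrank E (dual_indep E indep) E = r"
proof -
  obtain A where "spike_arms t r E indep A"
    using obtain_spike_arms[OF assms] .
  then interpret spike_arms t r E indep A .
  show ?thesis using mrank_ground dual_mrank_ground[OF matroid] card_ground by simp
qed

end
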